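(* Fix $t>0$. For $k\ge0$ and $n\ge1$ let $$q_{k,n}:=\frac{\int(\mathcal{L}_t-\mathcal{L}_{t,n})\,\mathcal{L}_{t,n}^k\,(\mathcal{L}_t-\mathcal{L}_{t,n})(f_0)\,dm}{\mu(B_n)},$$ where $m$ is Lebesgue measure. If for each $k\ge0$ the limit $q_k:=\lim_{n\to\infty}q_{k,n}$ exists, then $\sum_{k=0}^\infty q_k\le1$.
   Context: Consider on $\mathbb{R}^d$ the SDE $dX_t=b(X_t)dt+dW_t$, $X_0=x$, with $W$ a standard Brownian motion, $b$ Lipschitz continuous, and $\langle b(x),x\rangle\le R_1-R_2\|x\|^2$ for constants $R_1\in\mathbb{R}$, $R_2>0$. $S_t(x,y)$ is the transition density and $(\mathcal{L}_tf)(y):=\int S_t(x,y)f(x)\,dx$. The unique invariant probability measure is $\mu$ with Lebesgue density $f_0$. Fix $x_0\in\mathbb{R}^d$ and a real sequence $u_n\to+\infty$; $B_n:=B(x_0,e^{-u_n})$ and $(\mathcal{L}_{t,n}f)(x):=1_{B_n^c}(x)(\mathcal{L}_tf)(x)$. *)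

theory Defs
  imports "HOL-Probability.Probability"
begin

definition gauss_density :: "real \<Rightarrow> 'a::euclidean_space \<Rightarrow> real" where
  "gauss_density s x = (2 * pi * s) powr (- real DIM('a) / 2) * exp (- (norm x)\<^sup>2 / (2 * s))"

definition brownian_motion :: "'w measure \<Rightarrow> (real \<Rightarrow> 'w \<Rightarrow> 'a::euclidean_space) \<Rightarrow> bool" where
  "brownian_motion M W \<longleftrightarrow>
     prob_space M \<and>
     (\<forall>t\<ge>0. W t \<in> borel_measurable M) \<and>
     (\<forall>\<omega>\<in>space M. W 0 \<omega> = 0 \<and> continuous_on {0..} (\<lambda>t. W t \<omega>)) \<and>
     (\<forall>s t. 0 \<le> s \<longrightarrow> s < t \<longrightarrow>
        distributed M lborel (\<lambda>\<omega>. W t \<omega> - W s \<omega>) (\<lambda>x. ennreal (gauss_density (t - s) x))) \<and>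
     (\<forall>(n::nat) ts. (\<forall>i<n. 0 \<le> ts i \<and> ts i < ts (Suc i)) \<longrightarrow>
        prob_space.indep_vars M (\<lambda>_. borel) (\<lambda>i \<omega>. W (ts (Suc i)) \<omega> - W (ts i) \<omega>) {..<n})"

definition sde_solution :: "'w measure \<Rightarrow> ('a::euclidean_space \<Rightarrow> 'a) \<Rightarrow> (real \<Rightarrow> 'w \<Rightarrow> 'a)
    \<Rightarrow> 'a \<Rightarrow> (real \<Rightarrow> 'w \<Rightarrow> 'a) \<Rightarrow> bool" where
  "sde_solution M b W x X \<longleftrightarrow>
     (\<forall>\<omega>\<in>space M. continuous_on {0..} (\<lambda>t. X t \<omega>) \<and>
        (\<forall>t\<ge>0. X t \<omega> = x + integral {0..t} (\<lambda>r. b (X r \<omega>)) + W t \<omega>))"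

definition transfer_op :: "('a::euclidean_space \<Rightarrow> 'a \<Rightarrow> real) \<Rightarrow> ('a \<Rightarrow> real) \<Rightarrow> 'a \<Rightarrow> real" where
  "transfer_op St f = (\<lambda>y. \<integral>x. St x y * f x \<partial>lborel)"

text \<open>Perturbed operator (L_{t,n} f)(x) = 1_{B^c}(x) (L_t f)(x).\<close>
definition open_op :: "('a::euclidean_space \<Rightarrow> 'a \<Rightarrow> real) \<Rightarrow> 'a set \<Rightarrow> ('a \<Rightarrow> real) \<Rightarrow> 'a \<Rightarrow> real" where
  "open_op St B f = (\<lambda>x. indicator (- B) x * transfer_op St f x)"

definition diff_op :: "('a::euclidean_space \<Rightarrow> 'a \<Rightarrow> real) \<Rightarrow> 'a set \<Rightarrow> ('a \<Rightarrow> real) \<Rightarrow> 'a \<Rightarrow> real" where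
  "diff_op St B f = (\<lambda>x. transfer_op St f x - open_op St B f x)"

text \<open>q_{k,n} for the hole B, with \<mu> the measure with density f0.\<close>
definition q_coeff :: "('a::euclidean_space \<Rightarrow> 'a \<Rightarrow> real) \<Rightarrow> ('a \<Rightarrow> real) \<Rightarrow> 'a set \<Rightarrow> nat \<Rightarrow> real" where
  "q_coeff St f0 B k =
     (\<integral>y. diff_op St B ((open_op St B ^^ k) (diff_op St B f0)) y \<partial>lborel)
       / measure (density lborel (\<lambda>x. ennreal (f0 x))) B"

end

theory Submission
  imports Defs
begin

text \<open>
  Write \<open>L\<close> for \<open>\<L>\<^sub>t\<close>, \<open>L\<^sub>B h = 1\<^bsub>-B\<^esub> L h\<close> (\<open>open_op\<close>) and \<open>D\<^sub>B h = L h - L\<^sub>B h = 1\<^sub>B L h\<close> (\<open>diff_op\<close>). All three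
  operators are positive and, \<open>S\<^sub>t\<close> being a transition density, \<open>\<integral>L h \<le> \<integral>h\<close> for \<open>h \<ge> 0\<close>.
  Hence \<open>\<integral>D\<^sub>B h + \<integral>L\<^sub>B h \<le> \<integral>h\<close>, and telescoping along \<open>h, L\<^sub>B h, L\<^sub>B\<^sup>2 h, \<dots>\<close> gives
  \<open>\<Sum>\<^sub>k\<^sub><\<^sub>K \<integral>D\<^sub>B L\<^sub>B\<^sup>k h \<le> \<integral>h\<close>. For \<open>h = D\<^sub>B f\<^sub>0\<close>, Fubini and the invariance of \<open>\<mu>\<close> give
  \<open>\<integral>h \<le> \<mu>(B)\<close>, so every partial sum of the nonnegative \<open>q\<^sub>k\<^sub>,\<^sub>n\<close> is at most 1, and this
  bound passes to the limits \<open>q\<^sub>k\<close>.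
\<close>

lemma ennreal_integral_le_nn_integral:
  fixes f :: "'a \<Rightarrow> real"
  assumes "f \<in> borel_measurable M" "\<And>x. 0 \<le> f x"
  shows "ennreal (\<integral>x. f x \<partial>M) \<le> (\<integral>\<^sup>+x. ennreal (f x) \<partial>M)"
  using assms by (simp add: integral_eq_nn_integral ennreal_enn2real_if)

lemma diff_op_eq_indicator_transfer_op:
  "diff_op St B h x = indicator B x * transfer_op St h x"
  unfolding diff_op_def open_op_def by (auto simp: indicator_def)

lemma summable_suminf_le_of_tendsto:
  fixes a :: "nat \<Rightarrow> nat \<Rightarrow> real"
  assumes nonneg: "\<And>n k. 0 \<le> a n k" and partial_sums: "\<And>n K. (\<Sum>k<K. a n k) \<le> c"
    and limits: "\<And>k. (\<lambda>n. a n k) \<longlonglongrightarrow> l k"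
  shows "summable l \<and> suminf l \<le> c"
proof -
  have l_nonneg: "0 \<le> l k" for k
    using nonneg by (intro LIMSEQ_le_const[OF limits]) auto
  have l_partial_sums: "(\<Sum>k<K. l k) \<le> c" for K
    using partial_sums by (intro LIMSEQ_le_const2[OF tendsto_sum[OF limits]]) auto
  have "summable l"
    using l_nonneg l_partial_sums by (rule summableI_nonneg_bounded)
  then show ?thesis
    using l_partial_sums suminf_le_const by blast
qed

lemma nn_integral_indicator_eq_emeasure_distr:
  assumes "distributed M lborel Y (\<lambda>y. ennreal (f y))" "A \<in> sets borel"
  shows "(\<integral>\<^sup>+y. ennreal (f y) * indicator A y \<partial>lborel) = emeasure (distr M borel Y) A"
  using assms distributed_emeasure[OF assms(1), of A]
  by (simp add: distributed_def emeasure_distr)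

locale subprob_transition_density =
  fixes St :: "'a::euclidean_space \<Rightarrow> 'a \<Rightarrow> real"
  assumes measurable_kernel: "(\<lambda>(x, y). St x y) \<in> borel_measurable (lborel \<Otimes>\<^sub>M lborel)"
    and kernel_nonneg: "\<And>x y. 0 \<le> St x y"
    and kernel_mass_le_1: "\<And>x. (\<integral>\<^sup>+y. ennreal (St x y) \<partial>lborel) \<le> 1"
begin

lemma borel_measurable_kernel_pair [measurable]:
  "(\<lambda>p. St (fst p) (snd p)) \<in> borel_measurable (lborel \<Otimes>\<^sub>M lborel)"
  using measurable_kernel by (simp add: case_prod_beta)

lemma borel_measurable_kernel_fst [measurable]: "(\<lambda>x. St x y) \<in> borel_measurable borel"
  using measurable_Pair1[OF measurable_kernel, of y] by simp

lemma borel_measurable_kernel_snd [measurable]: "St x \<in> borel_measurable borel"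
  using measurable_Pair2[OF measurable_kernel, of x] by simp

lemma borel_measurable_transfer_op [measurable]:
  assumes "h \<in> borel_measurable borel"
  shows "transfer_op St h \<in> borel_measurable borel"
proof -
  have "(\<lambda>(y, x). St x y * h x) \<in> borel_measurable (lborel \<Otimes>\<^sub>M lborel)"
    using measurable_compose[OF measurable_pair_swap' borel_measurable_kernel_pair] assms
    by (simp add: case_prod_beta)
  from lborel.borel_measurable_lebesgue_integral[OF this] show ?thesis
    unfolding transfer_op_def by simp
qed

lemma transfer_op_nonneg: "(\<And>x. 0 \<le> h x) \<Longrightarrow> 0 \<le> transfer_op St h y"
  unfolding transfer_op_def by (simp add: kernel_nonneg)

lemma ennreal_transfer_op_le:
  assumes "h \<in> borel_measurable borel" "\<And>x. 0 \<le> h x"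
  shows "ennreal (transfer_op St h y) \<le> (\<integral>\<^sup>+x. ennreal (St x y * h x) \<partial>lborel)"
  unfolding transfer_op_def
  using assms kernel_nonneg by (intro ennreal_integral_le_nn_integral) auto

lemma nn_integral_indicator_transfer_op_le:
  assumes h: "h \<in> borel_measurable borel" "\<And>x. 0 \<le> h x" and B: "B \<in> sets borel"
  shows "(\<integral>\<^sup>+y. indicator B y * ennreal (transfer_op St h y) \<partial>lborel)
    \<le> (\<integral>\<^sup>+x. ennreal (h x) * (\<integral>\<^sup>+y. ennreal (St x y) * indicator B y \<partial>lborel) \<partial>lborel)"
proof -
  have "(\<integral>\<^sup>+y. indicator B y * ennreal (transfer_op St h y) \<partial>lborel)
      \<le> (\<integral>\<^sup>+y. indicator B y * (\<integral>\<^sup>+x. ennreal (St x y * h x) \<partial>lborel) \<partial>lborel)"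
    by (intro nn_integral_mono mult_left_mono ennreal_transfer_op_le h) simp
  also have "\<dots> = (\<integral>\<^sup>+y. (\<integral>\<^sup>+x. ennreal (h x) * (ennreal (St x y) * indicator B y) \<partial>lborel) \<partial>lborel)"
    using h kernel_nonneg
    by (simp add: nn_integral_cmult[symmetric] ennreal_mult mult_ac)
  also have "\<dots> = (\<integral>\<^sup>+x. (\<integral>\<^sup>+y. ennreal (h x) * (ennreal (St x y) * indicator B y) \<partial>lborel) \<partial>lborel)"
  proof (rule lborel_pair.Fubini')
    have "(\<lambda>p. ennreal (h (fst p)) * (ennreal (St (fst p) (snd p)) * indicator B (snd p)))
        \<in> borel_measurable (lborel \<Otimes>\<^sub>M lborel)"
      using h B by measurable
    then show "(\<lambda>(x, y). ennreal (h x) * (ennreal (St x y) * indicator B y))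
        \<in> borel_measurable (lborel \<Otimes>\<^sub>M lborel)"
      by (simp add: case_prod_beta)
  qed
  also have "\<dots> = (\<integral>\<^sup>+x. ennreal (h x) * (\<integral>\<^sup>+y. ennreal (St x y) * indicator B y \<partial>lborel) \<partial>lborel)"
    using B by (simp add: nn_integral_cmult)
  finally show ?thesis .
qed

lemma nn_integral_transfer_op_le:
  assumes "h \<in> borel_measurable borel" "\<And>x. 0 \<le> h x"
  shows "(\<integral>\<^sup>+y. ennreal (transfer_op St h y) \<partial>lborel) \<le> (\<integral>\<^sup>+x. ennreal (h x) \<partial>lborel)"
proof -
  have "(\<integral>\<^sup>+y. ennreal (transfer_op St h y) \<partial>lborel)
      \<le> (\<integral>\<^sup>+x. ennreal (h x) * (\<integral>\<^sup>+y. ennreal (St x y) \<partial>lborel) \<partial>lborel)"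
    using nn_integral_indicator_transfer_op_le[OF assms, of UNIV] by simp
  also have "\<dots> \<le> (\<integral>\<^sup>+x. ennreal (h x) \<partial>lborel)"
    using kernel_mass_le_1 by (intro nn_integral_mono) (simp add: mult_left_le)
  finally show ?thesis .
qed

lemma nn_integral_diff_op_le:
  assumes "h \<in> borel_measurable borel" "\<And>x. 0 \<le> h x" "B \<in> sets borel"
  shows "(\<integral>\<^sup>+y. ennreal (diff_op St B h y) \<partial>lborel)
    \<le> (\<integral>\<^sup>+x. ennreal (h x) * (\<integral>\<^sup>+y. ennreal (St x y) * indicator B y \<partial>lborel) \<partial>lborel)"
  using nn_integral_indicator_transfer_op_le[OF assms]
  by (simp add: diff_op_eq_indicator_transfer_op indicator_mult_ennreal mult.commute)

context
  fixes B :: "'a set"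
  assumes B: "B \<in> sets borel"
begin

lemma borel_measurable_open_op:
  assumes "h \<in> borel_measurable borel"
  shows "open_op St B h \<in> borel_measurable borel"
  unfolding open_op_def using assms B by measurable

lemma borel_measurable_diff_op:
  assumes "h \<in> borel_measurable borel"
  shows "diff_op St B h \<in> borel_measurable borel"
  unfolding diff_op_eq_indicator_transfer_op[abs_def] using assms B by measurable

lemma open_op_nonneg: "(\<And>x. 0 \<le> h x) \<Longrightarrow> 0 \<le> open_op St B h x"
  unfolding open_op_def by (simp add: transfer_op_nonneg)

lemma diff_op_nonneg: "(\<And>x. 0 \<le> h x) \<Longrightarrow> 0 \<le> diff_op St B h x"
  unfolding diff_op_eq_indicator_transfer_op by (simp add: transfer_op_nonneg)

lemma borel_measurable_open_op_power:
  "h \<in> borel_measurable borel \<Longrightarrow> (open_op St B ^^ k) h \<in> borel_measurable borel"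
  by (induction k) (simp_all add: borel_measurable_open_op)

lemma open_op_power_nonneg: "(\<And>x. 0 \<le> h x) \<Longrightarrow> 0 \<le> (open_op St B ^^ k) h x"
  by (induction k arbitrary: x) (simp_all add: open_op_nonneg)

lemma nn_integral_diff_op_add_open_op_le:
  assumes h: "h \<in> borel_measurable borel" "\<And>x. 0 \<le> h x"
  shows "(\<integral>\<^sup>+y. ennreal (diff_op St B h y) \<partial>lborel) + (\<integral>\<^sup>+y. ennreal (open_op St B h y) \<partial>lborel)
    \<le> (\<integral>\<^sup>+x. ennreal (h x) \<partial>lborel)"
proof -
  have "(\<integral>\<^sup>+y. ennreal (diff_op St B h y) \<partial>lborel) + (\<integral>\<^sup>+y. ennreal (open_op St B h y) \<partial>lborel)
      = (\<integral>\<^sup>+y. ennreal (diff_op St B h y + open_op St B h y) \<partial>lborel)"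
    using h by (simp add: nn_integral_add diff_op_nonneg open_op_nonneg
        borel_measurable_diff_op borel_measurable_open_op)
  also have "\<dots> = (\<integral>\<^sup>+y. ennreal (transfer_op St h y) \<partial>lborel)"
    by (simp add: diff_op_def)
  also have "\<dots> \<le> (\<integral>\<^sup>+x. ennreal (h x) \<partial>lborel)"
    using h by (rule nn_integral_transfer_op_le)
  finally show ?thesis .
qed

lemma sum_nn_integral_diff_op_power_le:
  assumes h: "h \<in> borel_measurable borel" "\<And>x. 0 \<le> h x"
  shows "(\<Sum>k<K. \<integral>\<^sup>+y. ennreal (diff_op St B ((open_op St B ^^ k) h) y) \<partial>lborel)
      + (\<integral>\<^sup>+y. ennreal ((open_op St B ^^ K) h y) \<partial>lborel)
    \<le> (\<integral>\<^sup>+x. ennreal (h x) \<partial>lborel)"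
proof (induction K)
  case (Suc K)
  let ?hK = "(open_op St B ^^ K) h"
  have "(\<Sum>k<Suc K. \<integral>\<^sup>+y. ennreal (diff_op St B ((open_op St B ^^ k) h) y) \<partial>lborel)
        + (\<integral>\<^sup>+y. ennreal ((open_op St B ^^ Suc K) h y) \<partial>lborel)
      = (\<Sum>k<K. \<integral>\<^sup>+y. ennreal (diff_op St B ((open_op St B ^^ k) h) y) \<partial>lborel)
        + ((\<integral>\<^sup>+y. ennreal (diff_op St B ?hK y) \<partial>lborel)
          + (\<integral>\<^sup>+y. ennreal (open_op St B ?hK y) \<partial>lborel))"
    by (simp add: add.assoc)
  also have "\<dots> \<le> (\<Sum>k<K. \<integral>\<^sup>+y. ennreal (diff_op St B ((open_op St B ^^ k) h) y) \<partial>lborel)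
        + (\<integral>\<^sup>+y. ennreal (?hK y) \<partial>lborel)"
    using h by (intro add_left_mono nn_integral_diff_op_add_open_op_le
        borel_measurable_open_op_power open_op_power_nonneg)
  also have "\<dots> \<le> (\<integral>\<^sup>+x. ennreal (h x) \<partial>lborel)"
    by (rule Suc.IH)
  finally show ?case .
qed simp

lemma sum_integral_diff_op_power_le:
  assumes h: "h \<in> borel_measurable borel" "\<And>x. 0 \<le> h x"
    and mass: "(\<integral>\<^sup>+x. ennreal (h x) \<partial>lborel) \<le> ennreal c" and "0 \<le> c"
  shows "(\<Sum>k<K. \<integral>y. diff_op St B ((open_op St B ^^ k) h) y \<partial>lborel) \<le> c"
proof -
  let ?g = "\<lambda>k. diff_op St B ((open_op St B ^^ k) h)"
  have g: "?g k \<in> borel_measurable borel" "\<And>y. 0 \<le> ?g k y" for k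
    using h by (simp_all add: borel_measurable_diff_op borel_measurable_open_op_power
        diff_op_nonneg open_op_power_nonneg)
  have "ennreal (\<Sum>k<K. \<integral>y. ?g k y \<partial>lborel) = (\<Sum>k<K. ennreal (\<integral>y. ?g k y \<partial>lborel))"
    using g by (simp add: integral_nonneg)
  also have "\<dots> \<le> (\<Sum>k<K. \<integral>\<^sup>+y. ennreal (?g k y) \<partial>lborel)"
    using g by (intro sum_mono ennreal_integral_le_nn_integral) auto
  also have "\<dots> \<le> (\<integral>\<^sup>+x. ennreal (h x) \<partial>lborel)"
    using sum_nn_integral_diff_op_power_le[OF h, of K]
    by (meson add_increasing2 order_refl order_trans zero_le)
  also note mass
  finally show ?thesis
    using \<open>0 \<le> c\<close> by (simp add: ennreal_le_iff)
qed

lemma q_coeff_nonneg: "(\<And>x. 0 \<le> f0 x) \<Longrightarrow> 0 \<le> q_coeff St f0 B k"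
  unfolding q_coeff_def by (simp add: integral_nonneg diff_op_nonneg open_op_power_nonneg)

lemma sum_q_coeff_le_1:
  assumes f0: "f0 \<in> borel_measurable borel" "\<And>x. 0 \<le> f0 x"
    and subinvariant: "(\<integral>\<^sup>+x. (\<integral>\<^sup>+y. ennreal (St x y) * indicator B y \<partial>lborel) \<partial>density lborel f0)
      \<le> emeasure (density lborel f0) B"
  shows "(\<Sum>k<K. q_coeff St f0 B k) \<le> 1"
proof -
  let ?\<mu> = "density lborel (\<lambda>x. ennreal (f0 x))"
  let ?m = "measure ?\<mu> B"
  have "(\<integral>\<^sup>+y. ennreal (diff_op St B f0 y) \<partial>lborel)
      \<le> (\<integral>\<^sup>+x. ennreal (f0 x) * (\<integral>\<^sup>+y. ennreal (St x y) * indicator B y \<partial>lborel) \<partial>lborel)"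
    using f0 B by (rule nn_integral_diff_op_le)
  also have "\<dots> = (\<integral>\<^sup>+x. (\<integral>\<^sup>+y. ennreal (St x y) * indicator B y \<partial>lborel) \<partial>?\<mu>)"
    using f0 B by (simp add: nn_integral_density)
  also have "\<dots> \<le> emeasure ?\<mu> B"
    using subinvariant by simp
  finally have mass: "(\<integral>\<^sup>+y. ennreal (diff_op St B f0 y) \<partial>lborel) \<le> emeasure ?\<mu> B" .
  show ?thesis
  proof (cases "?m = 0")
    \<comment> \<open>this includes \<open>\<mu>(B) = \<infinity>\<close>; then every \<open>q_coeff\<close> is \<open>x / 0 = 0\<close>\<close>
    case False
    then have "emeasure ?\<mu> B = ennreal ?m"
      using measure_zero_top by (blast intro: emeasure_eq_ennreal_measure)
    then have "(\<Sum>k<K. \<integral>y. diff_op St B ((open_op St B ^^ k) (diff_op St B f0)) y \<partial>lborel) \<le> ?m"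
      using f0 mass
      by (intro sum_integral_diff_op_power_le) (simp_all add: borel_measurable_diff_op diff_op_nonneg)
    moreover have "0 < ?m"
      using False measure_nonneg[of ?\<mu> B] by linarith
    ultimately show ?thesis
      by (simp add: q_coeff_def sum_divide_distrib[symmetric] pos_divide_le_eq)
  qed (simp add: q_coeff_def)
qed

end

end

theorem proposition30:
  fixes M :: "'w measure"
    and W :: "real \<Rightarrow> 'w \<Rightarrow> 'a::euclidean_space"
    and b :: "'a \<Rightarrow> 'a"
    and X :: "'a \<Rightarrow> real \<Rightarrow> 'w \<Rightarrow> 'a"
    and S :: "real \<Rightarrow> 'a \<Rightarrow> 'a \<Rightarrow> real"
    and f0 :: "'a \<Rightarrow> real"
    and R1 R2 Lb t :: real
    and x0 :: 'a
    and u :: "nat \<Rightarrow> real"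
  assumes bm: "brownian_motion M W"
    and lip: "Lb-lipschitz_on UNIV b"
    and dissip: "R2 > 0" "\<And>x. inner (b x) x \<le> R1 - R2 * (norm x)\<^sup>2"
    and sol: "\<And>x. sde_solution M b W x (X x)"
    and S_meas: "\<And>s. s > 0 \<Longrightarrow> (\<lambda>(x, y). S s x y) \<in> borel_measurable (lborel \<Otimes>\<^sub>M lborel)"
    and S_nonneg: "\<And>s x y. s > 0 \<Longrightarrow> S s x y \<ge> 0"
    and S_density: "\<And>s x. s > 0 \<Longrightarrow> distributed M lborel (X x s) (\<lambda>y. ennreal (S s x y))"
    and f0_meas: "f0 \<in> borel_measurable lborel"
    and f0_nonneg: "\<And>x. f0 x \<ge> 0"
    and mu_prob: "prob_space (density lborel (\<lambda>x. ennreal (f0 x)))"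
    and mu_inv: "\<And>s A. s > 0 \<Longrightarrow> A \<in> sets borel \<Longrightarrow>
        (\<integral>\<^sup>+x. emeasure (distr M borel (X x s)) A \<partial>(density lborel (\<lambda>x. ennreal (f0 x))))
          = emeasure (density lborel (\<lambda>x. ennreal (f0 x))) A"
    and t_pos: "t > 0"
    and u_lim: "filterlim u at_top sequentially"
    and q_conv: "\<And>k. convergent (\<lambda>n. q_coeff (S t) f0 (ball x0 (exp (- u n))) k)"
  shows "summable (\<lambda>k. lim (\<lambda>n. q_coeff (S t) f0 (ball x0 (exp (- u n))) k))
    \<and> (\<Sum>k. lim (\<lambda>n. q_coeff (S t) f0 (ball x0 (exp (- u n))) k)) \<le> 1"
proof -
  note kernel_mass = nn_integral_indicator_eq_emeasure_distr[OF S_density[OF t_pos]]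
  interpret subprob_transition_density "S t"
  proof
    fix x
    have "prob_space (distr M borel (X x t))"
      using bm S_density[OF t_pos, of x]
      by (intro prob_space.prob_space_distr) (auto simp: brownian_motion_def distributed_def)
    then show "(\<integral>\<^sup>+y. ennreal (S t x y) \<partial>lborel) \<le> 1"
      using kernel_mass[of UNIV x] by (simp add: prob_space.emeasure_le_1)
  qed (use S_meas S_nonneg t_pos in auto)
  have partial_sums: "(\<Sum>k<K. q_coeff (S t) f0 B k) \<le> 1" if "B \<in> sets borel" for B K
    using that f0_meas f0_nonneg mu_inv[OF t_pos that]
    by (intro sum_q_coeff_le_1) (simp_all add: kernel_mass)
  show ?thesis
    using partial_sums q_conv f0_nonneg
    by (intro summable_suminf_le_of_tendsto[where a = "\<lambda>n. q_coeff (S t) f0 (ball x0 (exp (- u n)))"])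
      (auto simp: q_coeff_nonneg convergent_LIMSEQ_iff)
qed

end
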